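(* For $a\ge0$ and $x>0$ let $$G_a(x)=\log\Gamma(x)-\left(x-\tfrac12\right)\log x-\tfrac1{12}\Psi'(x+a)+x-\tfrac12\log(2\pi).$$ Then for all $x>0$, $$G_a(x)=\int_0^{+\infty}\frac{t-2+(2+t)e^{-t}-\frac{t^3}{6}e^{-at}}{2t^2(1-e^{-t})}\,e^{-xt}\,\mathrm{d}t.$$ Moreover, $G_a$ is completely monotone on $(0,+\infty)$ if and only if $a\ge\frac12$, and $-G_a$ is completely monotone on $(0,+\infty)$ if and only if $a=0$.
   Context: $\Gamma$ is Euler's Gamma function and $\Psi=(\log\Gamma)'$ is the digamma function, so $\Psi'$ is the trigamma function. A function $f:(0,+\infty)\to\mathbb{R}$ is called completely monotone (CM) if $f\in C^\infty(0,+\infty)$ and $(-1)^k f^{(k)}(t)>0$ for all $t>0$ and all $k=0,1,2,\dots$. *)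

theory Defs
  imports "HOL-Analysis.Analysis"
begin

definition completely_monotone :: "(real \<Rightarrow> real) \<Rightarrow> bool" where
  "completely_monotone f \<longleftrightarrow>
     (\<forall>k. \<forall>t>0. ((deriv ^^ k) f) differentiable (at t)) \<and>
     (\<forall>k. \<forall>t>0. (-1) ^ k * (deriv ^^ k) f t > 0)"

text \<open>G_a(x); the trigamma function is Polygamma 1.\<close>
definition G :: "real \<Rightarrow> real \<Rightarrow> real" where
  "G a x = ln_Gamma x - (x - 1/2) * ln x - 1/12 * Polygamma 1 (x + a) + x - 1/2 * ln (2 * pi)"

end

theory Submission
  imports Defs "HOL-Real_Asymp.Real_Asymp"
begin

text \<open>
  Write \<open>G\<^sub>a = B - \<Psi>'(x + a)/12\<close>, where \<open>B\<close> is Binet's function. Binet's formula represents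
  \<open>B\<close> as the Laplace transform of \<open>b(t) = (1/2 - 1/t + 1/(e\<^sup>t - 1))/t\<close>; it is obtained by
  comparing second derivatives with the series representation of the trigamma function, which
  leaves an affine error that the recurrence and the duplication formula of \<open>\<Gamma>\<close> force to vanish.
  Since \<open>\<Psi>'(x + a)\<close> is the Laplace transform of \<open>t e\<^sup>-\<^sup>a\<^sup>t/(1 - e\<^sup>-\<^sup>t)\<close>, \<open>G\<^sub>a\<close> is the Laplace transform
  of the stated kernel, which is positive for \<open>a \<ge> 1/2\<close> and negative for \<open>a = 0\<close>; a Laplace
  transform of a positive kernel of linear growth is completely monotone. Conversely, for
  \<open>a < 1/2\<close> the kernel behaves like \<open>-(1 - 2a) t/24\<close> near \<open>0\<close>, so \<open>G\<^sub>a(x) < 0\<close> for large \<open>x\<close>; and for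
  \<open>a > 0\<close>, \<open>G\<^sub>a(x) \<rightarrow> +\<infinity>\<close> as \<open>x \<rightarrow> 0\<close> because \<open>\<Psi>'(a)\<close> stays finite.
\<close>

section \<open>Elementary inequalities\<close>

lemma DERIV_pos_imp_less_from_0:
  fixes f f' :: "real \<Rightarrow> real"
  assumes d: "\<And>x. (f has_real_derivative f' x) (at x)" and p: "\<And>x. x > 0 \<Longrightarrow> f' x > 0"
    and t: "t > 0"
  shows "f 0 < f t"
proof (rule DERIV_pos_imp_increasing_open[OF t])
  show "\<exists>y. (f has_real_derivative y) (at x) \<and> 0 < y" if "0 < x" "x < t" for x
    using d p that by blast
  show "continuous_on {0..t} f"
    by (meson DERIV_isCont continuous_at_imp_continuous_on d)
qed

lemma DERIV_nonneg_imp_le_from_0: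
  fixes f f' :: "real \<Rightarrow> real"
  assumes d: "\<And>x. (f has_real_derivative f' x) (at x)" and p: "\<And>x. x > 0 \<Longrightarrow> f' x \<ge> 0"
    and t: "t \<ge> 0"
  shows "f 0 \<le> f t"
proof (rule DERIV_nonneg_imp_increasing_open[OF t])
  show "\<exists>y. (f has_real_derivative y) (at x) \<and> 0 \<le> y" if "0 < x" "x < t" for x
    using d p that by blast
  show "continuous_on {0..t} f"
    by (meson DERIV_isCont continuous_at_imp_continuous_on d)
qed

lemma one_plus_mult_exp_neg_le_1:
  fixes t :: real
  shows "(1 + t) * exp (-t) \<le> 1"
proof -
  have "(1 + t) * exp (-t) \<le> exp t * exp (-t)"
    by (intro mult_right_mono) auto
  thus ?thesis by (simp add: exp_minus_inverse)
qed

lemma one_minus_exp_neg_ge: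
  fixes t :: real
  assumes "t \<ge> 0"
  shows "t / (1 + t) \<le> 1 - exp (-t)"
proof -
  have "exp (-t) \<le> 1 / (1 + t)"
    using one_plus_mult_exp_neg_le_1[of t] assms by (simp add: field_simps)
  moreover have "t / (1 + t) = 1 - 1 / (1 + t)"
    using assms by (simp add: field_simps)
  ultimately show ?thesis by simp
qed

lemma div_one_minus_exp_neg_le:
  fixes t :: real
  assumes t: "t > 0"
  shows "t / (1 - exp (-t)) \<le> 1 + t"
proof -
  have "t \<le> (1 - exp (-t)) * (1 + t)"
    using one_minus_exp_neg_ge[of t] t by (simp add: divide_le_eq)
  thus ?thesis using t by (simp add: divide_le_eq mult.commute)
qed

lemma binet_numerator_nonneg:
  fixes t :: real
  assumes t: "t \<ge> 0"
  shows "0 \<le> t - 2 + (2 + t) * exp (-t)"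
proof -
  have "(\<lambda>t. t - 2 + (2 + t) * exp (-t :: real)) 0 \<le> (\<lambda>t. t - 2 + (2 + t) * exp (-t)) t"
  proof (rule DERIV_nonneg_imp_le_from_0[where f' = "\<lambda>t. 1 - (1 + t) * exp (-t)", OF _ _ t])
    show "((\<lambda>t. t - 2 + (2 + t) * exp (-t :: real)) has_real_derivative 1 - (1 + x) * exp (-x)) (at x)"
      for x by (auto intro!: derivative_eq_intros simp: algebra_simps)
    show "0 \<le> 1 - (1 + x) * exp (-x)" for x :: real
      using one_plus_mult_exp_neg_le_1[of x] by simp
  qed
  thus ?thesis by simp
qed

lemma binet_numerator_le_self:
  fixes t :: real
  assumes "t \<ge> 0"
  shows "t - 2 + (2 + t) * exp (-t) \<le> t"
proof -
  have "(2 + t) * exp (-t) \<le> (2 * (1 + t)) * exp (-t)"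
    using assms by (intro mult_right_mono) auto
  thus ?thesis using one_plus_mult_exp_neg_le_1[of t] by linarith
qed

lemma one_minus_one_plus_mult_exp_neg_less:
  fixes x :: real
  assumes x: "x > 0"
  shows "1 - (1 + x) * exp (-x) < x\<^sup>2 / 2"
proof -
  have "(\<lambda>x. x\<^sup>2 / 2 - 1 + (1 + x) * exp (-x :: real)) 0 < (\<lambda>x. x\<^sup>2 / 2 - 1 + (1 + x) * exp (-x)) x"
  proof (rule DERIV_pos_imp_less_from_0[where f' = "\<lambda>x. x - x * exp (-x)", OF _ _ x])
    show "((\<lambda>x. x\<^sup>2 / 2 - 1 + (1 + x) * exp (-x :: real)) has_real_derivative y - y * exp (-y)) (at y)"
      for y by (auto intro!: derivative_eq_intros simp: algebra_simps)
    show "0 < y - y * exp (-y)" if "y > 0" for y :: real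
      using that by (simp add: mult_less_cancel_left1)
  qed
  thus ?thesis by simp
qed

lemma binet_numerator_less_cube:
  fixes t :: real
  assumes t: "t > 0"
  shows "t - 2 + (2 + t) * exp (-t) < t ^ 3 / 6"
proof -
  have "(\<lambda>x. x ^ 3 / 6 - (x - 2 + (2 + x) * exp (-x :: real))) 0
      < (\<lambda>x. x ^ 3 / 6 - (x - 2 + (2 + x) * exp (-x))) t"
  proof (rule DERIV_pos_imp_less_from_0[where f' = "\<lambda>x. x\<^sup>2 / 2 - (1 - (1 + x) * exp (-x))", OF _ _ t])
    show "((\<lambda>x. x ^ 3 / 6 - (x - 2 + (2 + x) * exp (-x :: real)))
        has_real_derivative y\<^sup>2 / 2 - (1 - (1 + y) * exp (-y))) (at y)" for y
      by (auto intro!: derivative_eq_intros simp: algebra_simps power2_eq_square power3_eq_cube)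
    show "0 < y\<^sup>2 / 2 - (1 - (1 + y) * exp (-y))" if "y > 0" for y :: real
      using one_minus_one_plus_mult_exp_neg_less[OF that] by simp
  qed
  thus ?thesis by simp
qed

lemma cube_exp_half_less_binet_numerator:
  fixes t :: real
  assumes t: "t > 0"
  shows "t ^ 3 / 6 * exp (-t / 2) < t - 2 + (2 + t) * exp (-t)"
proof -
  have cosh_gt: "0 < exp (x / 2) / 2 + exp (-x / 2) / 2 - 1" if x: "x > 0" for x :: real
  proof -
    have "(\<lambda>x. exp (x / 2) / 2 + exp (-x / 2) / 2 - 1) 0 < (\<lambda>x. exp (x / 2) / 2 + exp (-x / 2) / 2 - 1 :: real) x"
    proof (rule DERIV_pos_imp_less_from_0[where f' = "\<lambda>x. exp (x / 2) / 4 - exp (-x / 2) / 4", OF _ _ x])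
      show "((\<lambda>x. exp (x / 2) / 2 + exp (-x / 2) / 2 - 1 :: real)
          has_real_derivative exp (y / 2) / 4 - exp (-y / 2) / 4) (at y)" for y
        by (auto intro!: derivative_eq_intros simp: algebra_simps)
    qed simp
    thus ?thesis by simp
  qed
  have sinh_gt: "0 < x / 2 * (exp (x / 2) - exp (-x / 2) - x)" if x: "x > 0" for x :: real
  proof -
    have "(\<lambda>x. exp (x / 2) - exp (-x / 2) - x) 0 < (\<lambda>x. exp (x / 2) - exp (-x / 2) - x :: real) x"
    proof (rule DERIV_pos_imp_less_from_0[OF _ cosh_gt x])
      show "((\<lambda>x. exp (x / 2) - exp (-x / 2) - x :: real)
          has_real_derivative exp (y / 2) / 2 + exp (-y / 2) / 2 - 1) (at y)" for y
        by (auto intro!: derivative_eq_intros simp: algebra_simps)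
    qed
    thus ?thesis using x by simp
  qed
  have "(\<lambda>x. (x - 2) * exp (x / 2) + (2 + x) * exp (-x / 2) - x ^ 3 / 6) 0
      < (\<lambda>x. (x - 2) * exp (x / 2) + (2 + x) * exp (-x / 2) - x ^ 3 / 6 :: real) t"
  proof (rule DERIV_pos_imp_less_from_0[OF _ sinh_gt t])
    show "((\<lambda>x. (x - 2) * exp (x / 2) + (2 + x) * exp (-x / 2) - x ^ 3 / 6 :: real)
        has_real_derivative y / 2 * (exp (y / 2) - exp (-y / 2) - y)) (at y)" for y
      by (auto intro!: derivative_eq_intros simp: algebra_simps power2_eq_square)
  qed
  hence "t ^ 3 / 6 * exp (-t / 2) < ((t - 2) * exp (t / 2) + (2 + t) * exp (-t / 2)) * exp (-t / 2)"
    by (intro mult_strict_right_mono) auto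
  also have "\<dots> = (t - 2) * (exp (t / 2) * exp (-t / 2)) + (2 + t) * (exp (-t / 2) * exp (-t / 2))"
    by (simp add: algebra_simps)
  also have "exp (t / 2) * exp (-t / 2) = 1" by (simp add: exp_minus_inverse)
  also have "exp (-t / 2) * exp (-t / 2) = exp (-t)" by (simp flip: exp_add)
  finally show ?thesis by simp
qed

lemma binet_numerator_le_quintic:
  fixes t :: real
  assumes t: "t \<ge> 0"
  shows "t - 2 + (2 + t) * exp (-t) \<le> t ^ 3 / 6 - t ^ 4 / 12 + t ^ 5 / 40"
proof -
  have second: "0 \<le> x * (1 - x + x\<^sup>2 / 2 - exp (-x))" if x: "x > 0" for x :: real
  proof -
    have "(\<lambda>x. 1 - x + x\<^sup>2 / 2 - exp (-x)) 0 \<le> (\<lambda>x. 1 - x + x\<^sup>2 / 2 - exp (-x :: real)) x"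
    proof (rule DERIV_nonneg_imp_le_from_0[where f' = "\<lambda>x. x + exp (-x) - 1"])
      show "((\<lambda>x. 1 - x + x\<^sup>2 / 2 - exp (-x :: real)) has_real_derivative y + exp (-y) - 1) (at y)" for y
        by (auto intro!: derivative_eq_intros simp: algebra_simps)
      show "0 \<le> y + exp (-y) - 1" for y :: real
        using exp_ge_add_one_self[of "-y"] by linarith
    qed (use x in linarith)
    thus ?thesis using x by simp
  qed
  have first: "0 \<le> x\<^sup>2 / 2 - x ^ 3 / 3 + x ^ 4 / 8 - (1 - (1 + x) * exp (-x))" if x: "x > 0" for x :: real
  proof -
    have "(\<lambda>x. x\<^sup>2 / 2 - x ^ 3 / 3 + x ^ 4 / 8 - (1 - (1 + x) * exp (-x))) 0
        \<le> (\<lambda>x. x\<^sup>2 / 2 - x ^ 3 / 3 + x ^ 4 / 8 - (1 - (1 + x) * exp (-x :: real))) x"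
    proof (rule DERIV_nonneg_imp_le_from_0[OF _ second less_imp_le[OF x]])
      show "((\<lambda>x. x\<^sup>2 / 2 - x ^ 3 / 3 + x ^ 4 / 8 - (1 - (1 + x) * exp (-x :: real)))
          has_real_derivative y * (1 - y + y\<^sup>2 / 2 - exp (-y))) (at y)" for y
        by (auto intro!: derivative_eq_intros simp: algebra_simps power2_eq_square power3_eq_cube)
    qed
    thus ?thesis by simp
  qed
  have "(\<lambda>x. x ^ 3 / 6 - x ^ 4 / 12 + x ^ 5 / 40 - (x - 2 + (2 + x) * exp (-x))) 0
      \<le> (\<lambda>x. x ^ 3 / 6 - x ^ 4 / 12 + x ^ 5 / 40 - (x - 2 + (2 + x) * exp (-x :: real))) t"
  proof (rule DERIV_nonneg_imp_le_from_0[OF _ first t])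
    show "((\<lambda>x. x ^ 3 / 6 - x ^ 4 / 12 + x ^ 5 / 40 - (x - 2 + (2 + x) * exp (-x :: real)))
        has_real_derivative y\<^sup>2 / 2 - y ^ 3 / 3 + y ^ 4 / 8 - (1 - (1 + y) * exp (-y))) (at y)" for y
      by (auto intro!: derivative_eq_intros simp: algebra_simps power2_eq_square power3_eq_cube)
  qed
  thus ?thesis by simp
qed

lemma exp_neg_second_order_remainder_le:
  fixes u :: real
  assumes u: "u \<ge> 0"
  shows "exp (-u) - 1 + u \<le> u\<^sup>2 / 2"
proof -
  have "(\<lambda>u. u\<^sup>2 / 2 - (exp (-u) - 1 + u)) 0 \<le> (\<lambda>u. u\<^sup>2 / 2 - (exp (-u) - 1 + u :: real)) u"
  proof (rule DERIV_nonneg_imp_le_from_0[where f' = "\<lambda>u. u + exp (-u) - 1", OF _ _ u])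
    show "((\<lambda>u. u\<^sup>2 / 2 - (exp (-u) - 1 + u :: real)) has_real_derivative y + exp (-y) - 1) (at y)" for y
      by (auto intro!: derivative_eq_intros simp: algebra_simps)
    show "0 \<le> y + exp (-y) - 1" for y :: real
      using exp_ge_add_one_self[of "-y"] by linarith
  qed
  thus ?thesis by simp
qed

lemma exp_second_order_remainder_le:
  fixes v :: real
  assumes v: "v \<ge> 0"
  shows "exp v - 1 - v \<le> v\<^sup>2 / 2 * exp v"
proof -
  have "1 - (1 + v) * exp (-v) \<le> v\<^sup>2 / 2"
    using one_minus_one_plus_mult_exp_neg_less[of v] v by (cases "v = 0") auto
  hence "(1 - (1 + v) * exp (-v)) * exp v \<le> v\<^sup>2 / 2 * exp v"
    by (intro mult_right_mono) auto
  also have "(1 - (1 + v) * exp (-v)) * exp v = exp v - (1 + v) * (exp (-v) * exp v)"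
    by (simp add: algebra_simps)
  also have "exp (-v) * exp v = 1" by (simp flip: exp_add)
  finally show ?thesis by simp
qed

lemma exp_neg_mult_remainder_bound:
  fixes x y c t :: real
  assumes t: "t \<ge> 0" and cx: "c \<le> x" and cy: "c \<le> y"
  shows "\<bar>exp (-y * t) - exp (-x * t) + (y - x) * t * exp (-x * t)\<bar> \<le> (y - x)\<^sup>2 * t\<^sup>2 / 2 * exp (-c * t)"
proof -
  define u where "u = (y - x) * t"
  have e: "exp (-y * t) = exp (-x * t) * exp (-u)"
    unfolding u_def by (simp add: algebra_simps flip: exp_add)
  have eq: "exp (-y * t) - exp (-x * t) + (y - x) * t * exp (-x * t) = exp (-x * t) * (exp (-u) - 1 + u)"
    unfolding e u_def by (simp add: algebra_simps)
  have nonneg: "0 \<le> exp (-u) - 1 + u"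
    using exp_ge_add_one_self[of "-u"] by linarith
  have u2: "u\<^sup>2 = (y - x)\<^sup>2 * t\<^sup>2"
    unfolding u_def by (simp add: power_mult_distrib)
  show ?thesis
  proof (cases "u \<ge> 0")
    case True
    have "\<bar>exp (-x * t) * (exp (-u) - 1 + u)\<bar> = exp (-x * t) * (exp (-u) - 1 + u)"
      using nonneg by simp
    also have "\<dots> \<le> exp (-x * t) * (u\<^sup>2 / 2)"
      using exp_neg_second_order_remainder_le[OF True] by (intro mult_left_mono) auto
    also have "\<dots> \<le> exp (-c * t) * (u\<^sup>2 / 2)"
      using cx t by (intro mult_right_mono) (auto simp: mult_right_mono)
    finally show ?thesis unfolding eq u2 by (simp add: algebra_simps)
  next
    case False
    have "exp (-u) - 1 + u \<le> u\<^sup>2 / 2 * exp (-u)"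
      using exp_second_order_remainder_le[of "-u"] False by simp
    hence "\<bar>exp (-x * t) * (exp (-u) - 1 + u)\<bar> \<le> exp (-x * t) * (u\<^sup>2 / 2 * exp (-u))"
      using nonneg by (simp add: mult_left_mono)
    also have "\<dots> = exp (-y * t) * (u\<^sup>2 / 2)"
      using e by (simp add: algebra_simps)
    also have "\<dots> \<le> exp (-c * t) * (u\<^sup>2 / 2)"
      using cy t by (intro mult_right_mono) (auto simp: mult_right_mono)
    finally show ?thesis unfolding eq u2 by (simp add: algebra_simps)
  qed
qed

lemma power_mult_exp_neg_le:
  fixes t c :: real
  assumes t: "t \<ge> 0" and c: "c > 0"
  shows "t ^ k * exp (-c * t) \<le> (2 * real k / c) ^ k * exp (-(c / 2) * t)"
proof (cases "k = 0")
  case True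
  thus ?thesis using t c by simp
next
  case False
  have "(1 + (c * t / 2) / real k) ^ k \<le> exp (c * t / 2)"
  proof (rule exp_ge_one_plus_x_over_n_power_n)
    have "0 \<le> c * t" using t c by simp
    thus "c * t / 2 \<ge> - real k" by simp
  qed (use False in auto)
  moreover have "t ^ k = (2 * real k / c) ^ k * ((c * t / 2) / k) ^ k"
    using c False by (simp flip: power_mult_distrib)
  moreover have "((c * t / 2) / k) ^ k \<le> (1 + (c * t / 2) / real k) ^ k"
    using t c by (intro power_mono) auto
  moreover have "0 \<le> (2 * real k / c) ^ k"
    using c by simp
  ultimately have "t ^ k \<le> (2 * real k / c) ^ k * exp (c * t / 2)"
    by (metis mult_left_mono order_trans)
  hence "t ^ k * exp (-c * t) \<le> (2 * real k / c) ^ k * exp (c * t / 2) * exp (-c * t)"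
    by (intro mult_right_mono) auto
  also have "\<dots> = (2 * real k / c) ^ k * exp (-(c / 2) * t)"
    by (simp add: mult.assoc flip: exp_add)
  finally show ?thesis .
qed


section \<open>Integrals over the positive half-line\<close>

lemma integrable_on_Ioi_if_dominated:
  fixes f g :: "real \<Rightarrow> real"
  assumes "continuous_on {0<..} f" "g integrable_on {0<..}" "\<And>t. t > 0 \<Longrightarrow> \<bar>f t\<bar> \<le> g t"
  shows "f integrable_on {0<..}"
proof (rule measurable_bounded_by_integrable_imp_integrable[OF _ assms(2)])
  show "{0::real<..} \<in> sets lebesgue"
    by (simp add: borel_open sets_completionI_sets)
  thus "f \<in> borel_measurable (lebesgue_on {0<..})"
    by (rule continuous_imp_measurable_on_sets_lebesgue[OF assms(1)])
qed (use assms(3) in auto)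

lemma has_integral_Ioi_if_Ici:
  fixes f :: "real \<Rightarrow> real"
  assumes "(f has_integral I) {0..}"
  shows "(f has_integral I) {0<..}"
proof -
  have "negligible {x \<in> {0::real..} - {0<..}. f x \<noteq> 0}"
    by (rule negligible_subset[of "{0}"]) auto
  moreover have "negligible {x \<in> {0::real<..} - {0..}. f x \<noteq> 0}"
    by (rule negligible_subset[of "{}"]) auto
  ultimately show ?thesis
    using assms has_integral_spike_set_eq[of "{0..}" "{0<..}" f I] by blast
qed

lemma has_integral_Ioi_of_antiderivative:
  fixes F f :: "real \<Rightarrow> real"
  assumes F: "\<And>t. (F has_real_derivative f t) (at t)" and nonneg: "\<And>t. t \<ge> 0 \<Longrightarrow> f t \<ge> 0"
    and lim: "(F \<longlongrightarrow> L) at_top"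
  shows "(f has_integral (L - F 0)) {0<..}"
proof (rule has_integral_Ioi_if_Ici, rule has_integral_to_inf)
  have ftc: "(f has_integral (F y - F 0)) {0..y}" if "y \<ge> 0" for y
    using that has_field_derivative_at_within[OF F]
    by (intro fundamental_theorem_of_calculus) (auto simp: has_real_derivative_iff_has_vector_derivative)
  show "f integrable_on {0..y}" for y
  proof (cases "y \<ge> 0")
    case True
    thus ?thesis using ftc has_integral_integrable by blast
  next
    case False
    hence "{0..y} = {}" by auto
    thus ?thesis by (simp only: integrable_on_empty)
  qed
  have "\<forall>\<^sub>F y in at_top. F y - F 0 = integral {0..y} f"
    using eventually_ge_at_top[of "0::real"] by eventually_elim (simp add: integral_unique[OF ftc])
  moreover have "((\<lambda>y. F y - F 0) \<longlongrightarrow> L - F 0) at_top"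
    by (intro tendsto_intros lim)
  ultimately show "((\<lambda>y. integral {0..y} f) \<longlongrightarrow> L - F 0) at_top"
    by (rule Lim_transform_eventually[rotated])
qed (use nonneg in auto)

lemma has_integral_exp_neg_mult_Ioi:
  fixes x :: real
  assumes "x > 0"
  shows "((\<lambda>t. exp (-x * t)) has_integral 1 / x) {0<..}"
  using has_integral_exp_minus_to_infinity[of x 0] assms by (intro has_integral_Ioi_if_Ici) simp

lemma has_integral_mult_exp_neg_mult_Ioi:
  fixes x :: real
  assumes x: "x > 0"
  shows "((\<lambda>t. t * exp (-x * t)) has_integral 1 / x\<^sup>2) {0<..}"
proof -
  have "((\<lambda>t. t * exp (-x * t)) has_integral (0 - (-(0 / x + 1 / x\<^sup>2) * exp (-x * 0)))) {0<..}"
  proof (rule has_integral_Ioi_of_antiderivative)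
    show "((\<lambda>t. -(t / x + 1 / x\<^sup>2) * exp (-x * t)) has_real_derivative t * exp (-x * t)) (at t)" for t
      using x by (auto intro!: derivative_eq_intros simp: field_simps power2_eq_square)
    show "((\<lambda>t. -(t / x + 1 / x\<^sup>2) * exp (-x * t)) \<longlongrightarrow> 0) at_top"
      using x by real_asymp
  qed (use x in auto)
  thus ?thesis by simp
qed

lemma has_integral_square_mult_exp_neg_mult_Ioi:
  fixes x :: real
  assumes x: "x > 0"
  shows "((\<lambda>t. t\<^sup>2 * exp (-x * t)) has_integral 2 / x ^ 3) {0<..}"
proof -
  have "((\<lambda>t. t\<^sup>2 * exp (-x * t)) has_integral (0 - (-(0\<^sup>2 / x + 2 * 0 / x\<^sup>2 + 2 / x ^ 3) * exp (-x * 0)))) {0<..}"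
  proof (rule has_integral_Ioi_of_antiderivative)
    show "((\<lambda>t. -(t\<^sup>2 / x + 2 * t / x\<^sup>2 + 2 / x ^ 3) * exp (-x * t)) has_real_derivative t\<^sup>2 * exp (-x * t)) (at t)" for t
      using x by (auto intro!: derivative_eq_intros simp: field_simps power2_eq_square power3_eq_cube)
    show "((\<lambda>t. -(t\<^sup>2 / x + 2 * t / x\<^sup>2 + 2 / x ^ 3) * exp (-x * t)) \<longlongrightarrow> 0) at_top"
      using x by real_asymp
  qed (use x in auto)
  thus ?thesis by simp
qed

lemma integrable_power_mult_exp_neg_mult_Ioi:
  fixes c :: real
  assumes c: "c > 0"
  shows "(\<lambda>t. t ^ k * exp (-c * t)) integrable_on {0<..}"
proof (rule integrable_on_Ioi_if_dominated)
  show "continuous_on {0<..} (\<lambda>t. t ^ k * exp (-c * t))"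
    by (intro continuous_intros)
  show "(\<lambda>t. (2 * real k / c) ^ k * exp (-(c / 2) * t)) integrable_on {0<..}"
    using c by (intro integrable_on_mult_right has_integral_integrable[OF has_integral_exp_neg_mult_Ioi]) simp
  show "\<bar>t ^ k * exp (-c * t)\<bar> \<le> (2 * real k / c) ^ k * exp (-(c / 2) * t)" if "t > 0" for t
    using power_mult_exp_neg_le[of t c k] that c by simp
qed


section \<open>Derivatives of Laplace transforms\<close>

definition laplace_deriv :: "nat \<Rightarrow> (real \<Rightarrow> real) \<Rightarrow> real \<Rightarrow> real" where
  "laplace_deriv k h x = integral {0<..} (\<lambda>t. (-t) ^ k * h t * exp (-x * t))"

lemma laplace_deriv_uminus: "laplace_deriv k (\<lambda>t. - h t) x = - laplace_deriv k h x"
  unfolding laplace_deriv_def by simp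

lemma laplace_deriv_integrable:
  fixes h :: "real \<Rightarrow> real" and M x :: real
  assumes hc: "continuous_on {0<..} h" and hb: "\<And>t. t > 0 \<Longrightarrow> \<bar>h t\<bar> \<le> M * (1 + t)" and x: "x > 0"
  shows "(\<lambda>t. (-t) ^ k * h t * exp (-x * t)) integrable_on {0<..}"
proof (rule integrable_on_Ioi_if_dominated)
  show "continuous_on {0<..} (\<lambda>t. (-t) ^ k * h t * exp (-x * t))"
    by (intro continuous_intros hc)
  show "(\<lambda>t. M * (t ^ k * exp (-x * t)) + M * (t ^ Suc k * exp (-x * t))) integrable_on {0<..}"
    by (intro integrable_add integrable_on_mult_right integrable_power_mult_exp_neg_mult_Ioi x)
  show "\<bar>(-t) ^ k * h t * exp (-x * t)\<bar> \<le> M * (t ^ k * exp (-x * t)) + M * (t ^ Suc k * exp (-x * t))"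
    if t: "t > 0" for t
  proof -
    have "\<bar>(-t) ^ k * h t * exp (-x * t)\<bar> = t ^ k * \<bar>h t\<bar> * exp (-x * t)"
      using t by (simp add: abs_mult power_abs)
    also have "\<dots> \<le> t ^ k * (M * (1 + t)) * exp (-x * t)"
      using hb[OF t] t by (intro mult_right_mono mult_left_mono) auto
    also have "\<dots> = M * (t ^ k * exp (-x * t)) + M * (t ^ Suc k * exp (-x * t))"
      by (simp add: algebra_simps)
    finally show ?thesis .
  qed
qed

lemma has_real_derivative_if_quadratic_remainder:
  fixes f :: "real \<Rightarrow> real"
  assumes d: "d > 0" and q: "\<And>y. \<bar>y - x\<bar> < d \<Longrightarrow> \<bar>f y - f x - D * (y - x)\<bar> \<le> K * (y - x)\<^sup>2"
  shows "(f has_real_derivative D) (at x)"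
proof -
  have "((\<lambda>y. (f y - f x) / (y - x) - D) \<longlongrightarrow> 0) (at x)"
  proof (rule Lim_null_comparison)
    show "((\<lambda>y. K * \<bar>y - x\<bar>) \<longlongrightarrow> 0) (at x)"
      by (rule tendsto_eq_intros refl)+ simp
    show "eventually (\<lambda>y. norm ((f y - f x) / (y - x) - D) \<le> K * \<bar>y - x\<bar>) (at x)"
      unfolding eventually_at
    proof (intro exI[of _ d] conjI ballI impI d)
      fix y :: real
      assume "y \<noteq> x \<and> dist y x < d"
      hence yx: "\<bar>y - x\<bar> > 0" "\<bar>y - x\<bar> < d"
        by (auto simp: dist_real_def)
      have "norm ((f y - f x) / (y - x) - D) = \<bar>f y - f x - D * (y - x)\<bar> / \<bar>y - x\<bar>"
        using yx by (simp add: field_simps abs_divide)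
      also have "\<dots> \<le> K * (y - x)\<^sup>2 / \<bar>y - x\<bar>"
        using q[OF yx(2)] yx by (intro divide_right_mono) auto
      also have "\<dots> = K * \<bar>y - x\<bar>"
      proof -
        have "K * a\<^sup>2 / a = K * a" if "a > 0" for a :: real
          using that by (simp add: power2_eq_square)
        thus ?thesis by (metis yx(1) power2_abs)
      qed
      finally show "norm ((f y - f x) / (y - x) - D) \<le> K * \<bar>y - x\<bar>" .
    qed
  qed
  thus ?thesis
    using Lim_null[of "\<lambda>y. (f y - f x) / (y - x)" D "at x"] by (simp add: has_field_derivative_iff)
qed

lemma laplace_deriv_remainder_bound:
  fixes h :: "real \<Rightarrow> real" and M c x y :: real and k :: nat
  assumes hc: "continuous_on {0<..} h" and hb: "\<And>t. t > 0 \<Longrightarrow> \<bar>h t\<bar> \<le> M * (1 + t)"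
    and c: "c > 0" "c \<le> x" "c \<le> y"
  defines "I \<equiv> integral {0<..} (\<lambda>t. t ^ (k + 2) * exp (-c * t) + t ^ (k + 3) * exp (-c * t))"
  shows "\<bar>laplace_deriv k h y - laplace_deriv k h x - laplace_deriv (Suc k) h x * (y - x)\<bar> \<le> M / 2 * I * (y - x)\<^sup>2"
proof -
  have x: "x > 0" and y: "y > 0" using c by auto
  have M: "M \<ge> 0" using hb[of 1] by simp
  define r where "r t = (-t) ^ k * h t * (exp (-y * t) - exp (-x * t) + (y - x) * t * exp (-x * t))" for t
  define g where "g t = M / 2 * (y - x)\<^sup>2 * (t ^ (k + 2) * exp (-c * t) + t ^ (k + 3) * exp (-c * t))" for t
  have r_int: "(r has_integral laplace_deriv k h y - laplace_deriv k h x - (y - x) * laplace_deriv (Suc k) h x) {0<..}"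
  proof -
    have "((\<lambda>t. (-t) ^ k * h t * exp (-y * t) - (-t) ^ k * h t * exp (-x * t)
        - (y - x) * ((-t) ^ Suc k * h t * exp (-x * t))) has_integral
        laplace_deriv k h y - laplace_deriv k h x - (y - x) * laplace_deriv (Suc k) h x) {0<..}"
      unfolding laplace_deriv_def
      by (intro has_integral_diff has_integral_mult_right integrable_integral
          laplace_deriv_integrable[OF hc hb] x y)
    thus ?thesis
      by (rule has_integral_eq[rotated]) (simp add: r_def algebra_simps)
  qed
  have g_int: "(g has_integral M / 2 * (y - x)\<^sup>2 * I) {0<..}"
    unfolding g_def I_def using c(1)
    by (intro has_integral_mult_right integrable_integral integrable_add
        integrable_power_mult_exp_neg_mult_Ioi)
  have "norm (r t) \<le> g t" if t: "t \<in> {0<..}" for t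
  proof -
    have "norm (r t) = t ^ k * \<bar>h t\<bar> * \<bar>exp (-y * t) - exp (-x * t) + (y - x) * t * exp (-x * t)\<bar>"
      using t by (simp add: r_def abs_mult power_abs)
    also have "\<dots> \<le> t ^ k * (M * (1 + t)) * ((y - x)\<^sup>2 * t\<^sup>2 / 2 * exp (-c * t))"
      using hb exp_neg_mult_remainder_bound[of t c x y] t c M
      by (intro mult_mono mult_left_mono) auto
    also have "\<dots> = g t"
      unfolding g_def power_add by (simp add: field_simps power2_eq_square power3_eq_cube)
    finally show ?thesis .
  qed
  hence "norm (integral {0<..} r) \<le> integral {0<..} g"
    using r_int g_int by (intro integral_norm_bound_integral) auto
  thus ?thesis
    using integral_unique[OF r_int] integral_unique[OF g_int] by (simp add: algebra_simps)
qed

lemma laplace_deriv_has_real_derivative: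
  fixes h :: "real \<Rightarrow> real" and M x :: real
  assumes hc: "continuous_on {0<..} h" and hb: "\<And>t. t > 0 \<Longrightarrow> \<bar>h t\<bar> \<le> M * (1 + t)" and x: "x > 0"
  shows "(laplace_deriv k h has_real_derivative laplace_deriv (Suc k) h x) (at x)"
proof (rule has_real_derivative_if_quadratic_remainder)
  show "x / 2 > 0" using x by simp
  fix y
  assume "\<bar>y - x\<bar> < x / 2"
  hence "x / 2 \<le> y" by linarith
  thus "\<bar>laplace_deriv k h y - laplace_deriv k h x - laplace_deriv (Suc k) h x * (y - x)\<bar>
      \<le> M / 2 * integral {0<..} (\<lambda>t. t ^ (k + 2) * exp (-(x / 2) * t) + t ^ (k + 3) * exp (-(x / 2) * t)) * (y - x)\<^sup>2"
    using x by (intro laplace_deriv_remainder_bound[OF hc hb]) auto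
qed

lemma higher_deriv_laplace:
  fixes h g :: "real \<Rightarrow> real" and M x :: real
  assumes hc: "continuous_on {0<..} h" and hb: "\<And>t. t > 0 \<Longrightarrow> \<bar>h t\<bar> \<le> M * (1 + t)"
    and g: "\<And>x. x > 0 \<Longrightarrow> g x = laplace_deriv 0 h x" and x: "x > 0"
  shows "(deriv ^^ k) g x = laplace_deriv k h x
    \<and> ((deriv ^^ k) g has_real_derivative laplace_deriv (Suc k) h x) (at x)"
  using x
proof (induction k arbitrary: x)
  case 0
  have "(g has_real_derivative laplace_deriv (Suc 0) h x) (at x)"
    by (rule has_field_derivative_transform_within_open
        [OF laplace_deriv_has_real_derivative[OF hc hb 0] open_greaterThan])
       (use 0 g in auto)
  thus ?case using 0 g by simp
next
  case (Suc k)
  have eq: "(deriv ^^ Suc k) g y = laplace_deriv (Suc k) h y" if "y > 0" for y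
    using Suc.IH[OF that] DERIV_imp_deriv by (metis comp_apply funpow.simps(2))
  have "((deriv ^^ Suc k) g has_real_derivative laplace_deriv (Suc (Suc k)) h x) (at x)"
    by (rule has_field_derivative_transform_within_open
        [OF laplace_deriv_has_real_derivative[OF hc hb Suc.prems] open_greaterThan])
       (use Suc.prems eq in auto)
  thus ?case using eq[OF Suc.prems] by simp
qed

lemma integral_Ioi_pos_if_continuous_pos:
  fixes f :: "real \<Rightarrow> real"
  assumes int: "f integrable_on {0<..}" and cont: "continuous_on {0<..} f" and pos: "\<And>t. t > 0 \<Longrightarrow> f t > 0"
  shows "integral {0<..} f > 0"
proof -
  have cont12: "continuous_on {1..2} f"
    by (rule continuous_on_subset[OF cont]) auto
  obtain z where z: "z \<in> {1..2}" "\<And>y. y \<in> {1..2} \<Longrightarrow> f z \<le> f y"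
    using continuous_attains_inf[OF compact_Icc _ cont12] by auto
  have "f z = integral {1..2::real} (\<lambda>_. f z)" by simp
  also have "\<dots> \<le> integral {1..2} f"
    by (rule integral_le) (use z cont12 integrable_continuous_interval in auto)
  also have "\<dots> \<le> integral {0<..} f"
    by (rule integral_subset_le) (use int cont12 integrable_continuous_interval pos in \<open>auto intro: less_imp_le\<close>)
  finally show ?thesis using pos[of z] z(1) by simp
qed

lemma laplace_deriv_sign:
  fixes h :: "real \<Rightarrow> real" and M x :: real
  assumes hc: "continuous_on {0<..} h" and hb: "\<And>t. t > 0 \<Longrightarrow> \<bar>h t\<bar> \<le> M * (1 + t)"
    and hp: "\<And>t. t > 0 \<Longrightarrow> h t > 0" and x: "x > 0"
  shows "(-1) ^ k * laplace_deriv k h x > 0"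
proof -
  have sign: "(-1) ^ k * ((-t) ^ k * h t * exp (-x * t)) = t ^ k * h t * exp (-x * t)" for t :: real
    by (simp add: mult.assoc flip: power_mult_distrib)
  have int: "(\<lambda>t. (-t) ^ k * h t * exp (-x * t)) integrable_on {0<..}"
    by (rule laplace_deriv_integrable[OF hc hb x])
  have "(-1) ^ k * laplace_deriv k h x = integral {0<..} (\<lambda>t. t ^ k * h t * exp (-x * t))"
    unfolding laplace_deriv_def by (simp only: integral_mult[OF int] sign)
  also have "\<dots> > 0"
  proof (rule integral_Ioi_pos_if_continuous_pos)
    show "(\<lambda>t. t ^ k * h t * exp (-x * t)) integrable_on {0<..}"
      using integrable_on_mult_right[OF int, of "(-1) ^ k"] by (simp only: sign)
    show "continuous_on {0<..} (\<lambda>t. t ^ k * h t * exp (-x * t))"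
      by (intro continuous_intros hc)
  qed (use hp in simp)
  finally show ?thesis .
qed

lemma completely_monotone_laplace:
  fixes h g :: "real \<Rightarrow> real" and M :: real
  assumes hc: "continuous_on {0<..} h" and hb: "\<And>t. t > 0 \<Longrightarrow> \<bar>h t\<bar> \<le> M * (1 + t)"
    and hp: "\<And>t. t > 0 \<Longrightarrow> h t > 0" and g: "\<And>x. x > 0 \<Longrightarrow> g x = laplace_deriv 0 h x"
  shows "completely_monotone g"
  unfolding completely_monotone_def
proof (intro conjI allI impI)
  fix k :: nat and t :: real
  assume t: "t > 0"
  from higher_deriv_laplace[OF hc hb g t, of k] show "(deriv ^^ k) g differentiable (at t)"
    using real_differentiable_def by blast
  from higher_deriv_laplace[OF hc hb g t, of k] laplace_deriv_sign[OF hc hb hp t, of k]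
  show "(-1) ^ k * (deriv ^^ k) g t > 0"
    by simp
qed

lemma completely_monotone_imp_pos:
  assumes "completely_monotone f" "x > 0"
  shows "f x > 0"
  using assms unfolding completely_monotone_def by (metis funpow_0 mult_1 power_0)


section \<open>Binet's formula\<close>

lemma mult_exp_neg_div_one_minus_exp_neg_sums:
  fixes x t :: real
  assumes t: "t > 0"
  shows "(\<lambda>n. t * exp (-(x + real n) * t)) sums (t * exp (-x * t) / (1 - exp (-t)))"
proof -
  have "(\<lambda>n. exp (-t) ^ n) sums (1 / (1 - exp (-t)))"
    using geometric_sums[of "exp (-t)"] t by simp
  hence "(\<lambda>n. t * exp (-x * t) * exp (-t) ^ n) sums (t * exp (-x * t) * (1 / (1 - exp (-t))))"
    by (rule sums_mult)
  moreover have "(\<lambda>n. t * exp (-x * t) * exp (-t) ^ n) = (\<lambda>n. t * exp (-(x + real n) * t))"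
    by (rule ext) (simp add: algebra_simps flip: exp_of_nat_mult exp_add)
  ultimately show ?thesis by simp
qed

text \<open>Termwise integration of \<open>\<Psi>'(x) = \<Sum>\<^sub>n 1/(x + n)\<^sup>2\<close>, justified by monotone convergence.\<close>

lemma trigamma_has_integral:
  fixes x :: real
  assumes x: "x > 0"
  shows "((\<lambda>t. t * exp (-x * t) / (1 - exp (-t))) has_integral Polygamma 1 x) {0<..}"
proof -
  define f where "f m t = (\<Sum>n<m. t * exp (-(x + real n) * t))" for m t
  define s where "s m = (\<Sum>n<m. 1 / (x + real n)\<^sup>2)" for m
  have f_int: "(f m has_integral s m) {0<..}" for m
    unfolding f_def s_def
    by (intro has_integral_sum has_integral_mult_exp_neg_mult_Ioi) (use x in auto)
  have "(\<lambda>n. 1 / (x + real n)\<^sup>2) sums Polygamma 1 x"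
    using Polygamma_LIMSEQ[of x 1] x by (simp add: inverse_eq_divide power2_eq_square)
  hence s_lim: "s \<longlonglongrightarrow> Polygamma 1 x"
    unfolding s_def sums_def .
  have f_lim: "(\<lambda>m. f m t) \<longlonglongrightarrow> t * exp (-x * t) / (1 - exp (-t))" if "t \<in> {0<..}" for t
    using mult_exp_neg_div_one_minus_exp_neg_sums[of t x] that unfolding f_def sums_def by simp
  have f_mono: "f m t \<le> f (Suc m) t" if "t \<in> {0<..}" for m t
    using that by (simp add: f_def)
  have integral_f: "(\<lambda>m. integral {0<..} (f m)) = s"
    using f_int integral_unique by auto
  have "bounded (range (\<lambda>m. integral {0<..} (f m)))"
    unfolding integral_f by (rule convergent_imp_bounded[OF s_lim])
  hence lim: "(\<lambda>t. t * exp (-x * t) / (1 - exp (-t))) integrable_on {0<..} \<and>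
      s \<longlonglongrightarrow> integral {0<..} (\<lambda>t. t * exp (-x * t) / (1 - exp (-t)))"
    unfolding integral_f[symmetric]
    by (intro monotone_convergence_increasing[OF _ f_mono f_lim]) (use f_int in blast)+
  hence "integral {0<..} (\<lambda>t. t * exp (-x * t) / (1 - exp (-t))) = Polygamma 1 x"
    using s_lim LIMSEQ_unique by blast
  with lim show ?thesis
    using integrable_integral by fastforce
qed

text \<open>
  \<open>binet_kernel t = (1/2 - 1/t + 1/(e\<^sup>t - 1))/t\<close>, written with \<open>e\<^sup>-\<^sup>t\<close> as in the integrand of
  the theorem.
\<close>

definition binet_kernel :: "real \<Rightarrow> real" where
  "binet_kernel t = (t - 2 + (2 + t) * exp (-t)) / (2 * t\<^sup>2 * (1 - exp (-t)))"

definition binet :: "real \<Rightarrow> real" where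
  "binet x = ln_Gamma x - (x - 1/2) * ln x + x - 1/2 * ln (2 * pi)"

lemma binet_kernel_nonneg: "t > 0 \<Longrightarrow> 0 \<le> binet_kernel t"
  unfolding binet_kernel_def using binet_numerator_nonneg[of t] by (intro divide_nonneg_pos) auto

lemma binet_kernel_le_1:
  fixes t :: real
  assumes t: "t > 0"
  shows "binet_kernel t \<le> 1"
proof -
  define N where "N = t - 2 + (2 + t) * exp (-t)"
  have N: "0 \<le> N" "N \<le> t" "N < t ^ 3 / 6"
    unfolding N_def using t binet_numerator_nonneg binet_numerator_le_self binet_numerator_less_cube
    by auto
  have "2 * t\<^sup>2 * (t / (1 + t)) \<le> 2 * t\<^sup>2 * (1 - exp (-t))"
    using one_minus_exp_neg_ge[of t] t by (intro mult_left_mono) auto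
  hence "binet_kernel t \<le> N / (2 * t\<^sup>2 * (t / (1 + t)))"
    unfolding binet_kernel_def N_def[symmetric] using N t by (intro divide_left_mono) auto
  also have "\<dots> = N * (1 + t) / (2 * t ^ 3)"
    using t by (simp add: field_simps power2_eq_square power3_eq_cube)
  also have "\<dots> \<le> 1"
  proof (cases "t \<le> 1")
    case True
    have "N * (1 + t) \<le> t ^ 3 / 6 * 2"
      using N True t by (intro mult_mono) auto
    also have "\<dots> \<le> 2 * t ^ 3" using t by simp
    finally show ?thesis using t by (simp add: divide_le_eq)
  next
    case False
    have "N * (1 + t) \<le> t * (1 + t)"
      using N t by (intro mult_right_mono) auto
    also have "\<dots> \<le> 2 * t ^ 3"
    proof -
      have "t ^ 1 \<le> t ^ 3" "t ^ 2 \<le> t ^ 3"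
        using False by (intro power_increasing; simp)+
      thus ?thesis by (simp add: algebra_simps power2_eq_square)
    qed
    finally show ?thesis using t by (simp add: divide_le_eq)
  qed
  finally show ?thesis .
qed

lemma binet_kernel_continuous: "continuous_on {0<..} binet_kernel"
  unfolding binet_kernel_def by (intro continuous_intros) auto

lemma abs_binet_kernel_le: "t > 0 \<Longrightarrow> \<bar>binet_kernel t\<bar> \<le> 1 * (1 + t)"
  using binet_kernel_nonneg[of t] binet_kernel_le_1[of t] by simp

lemma laplace_deriv_2_binet_kernel:
  fixes x :: real
  assumes x: "x > 0"
  shows "laplace_deriv 2 binet_kernel x = Polygamma 1 x - 1 / (2 * x\<^sup>2) - 1 / x"
proof -
  have "((\<lambda>t. t * exp (-x * t) / (1 - exp (-t)) - 1/2 * (t * exp (-x * t)) - exp (-x * t)) has_integral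
      (Polygamma 1 x - 1/2 * (1 / x\<^sup>2) - 1 / x)) {0<..}"
    by (intro has_integral_diff has_integral_mult_right trigamma_has_integral
        has_integral_mult_exp_neg_mult_Ioi has_integral_exp_neg_mult_Ioi x)
  hence "((\<lambda>t. (-t)\<^sup>2 * binet_kernel t * exp (-x * t)) has_integral (Polygamma 1 x - 1/2 * (1 / x\<^sup>2) - 1 / x)) {0<..}"
  proof (rule has_integral_eq[rotated])
    fix t :: real
    assume "t \<in> {0<..}"
    hence "t > 0" "1 - exp (-t) \<noteq> 0" by auto
    thus "t * exp (-x * t) / (1 - exp (-t)) - 1/2 * (t * exp (-x * t)) - exp (-x * t)
        = (-t)\<^sup>2 * binet_kernel t * exp (-x * t)"
      unfolding binet_kernel_def by (simp add: field_simps power2_eq_square)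
  qed
  thus ?thesis
    unfolding laplace_deriv_def by (simp add: integral_unique)
qed

lemma abs_laplace_binet_kernel_le:
  fixes x :: real
  assumes x: "x > 0"
  shows "\<bar>laplace_deriv 0 binet_kernel x\<bar> \<le> 1 / x"
proof -
  have "norm (integral {0<..} (\<lambda>t. (-t) ^ 0 * binet_kernel t * exp (-x * t))) \<le> integral {0<..} (\<lambda>t. exp (-x * t))"
  proof (rule integral_norm_bound_integral)
    show "(\<lambda>t. (-t) ^ 0 * binet_kernel t * exp (-x * t)) integrable_on {0<..}"
      by (rule laplace_deriv_integrable[OF binet_kernel_continuous abs_binet_kernel_le x])
    show "(\<lambda>t. exp (-x * t)) integrable_on {0<..}"
      using has_integral_exp_neg_mult_Ioi[OF x] by blast
    show "norm ((-t) ^ 0 * binet_kernel t * exp (-x * t)) \<le> exp (-x * t)" if "t \<in> {0<..}" for t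
      using binet_kernel_nonneg[of t] binet_kernel_le_1[of t] that
      by (simp add: abs_mult mult_le_cancel_right1)
  qed
  thus ?thesis
    using integral_unique[OF has_integral_exp_neg_mult_Ioi[OF x]] unfolding laplace_deriv_def by simp
qed

lemma laplace_binet_kernel_tendsto_0: "(laplace_deriv 0 binet_kernel \<longlongrightarrow> 0) at_top"
proof (rule Lim_null_comparison)
  show "\<forall>\<^sub>F x in at_top. norm (laplace_deriv 0 binet_kernel x) \<le> 1 / x"
    using eventually_gt_at_top[of "0::real"] by eventually_elim (simp add: abs_laplace_binet_kernel_le)
  show "((\<lambda>x::real. 1 / x) \<longlongrightarrow> 0) at_top"
    by real_asymp
qed

lemma ln_Gamma_plus1_real:
  fixes x :: real
  assumes x: "x > 0"
  shows "ln_Gamma (x + 1) = ln_Gamma x + ln x"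
proof -
  have "Gamma (x + 1) = x * Gamma x"
    using Gamma_plus1[of x] x nonpos_Ints_nonpos by fastforce
  hence "ln (Gamma (x + 1)) = ln x + ln (Gamma x)"
    using x by (simp add: ln_mult_pos)
  thus ?thesis using x by (simp add: ln_Gamma_real_pos)
qed

lemma Gamma_legendre_duplication_real:
  fixes x :: real
  assumes x: "x > 0"
  shows "Gamma x * Gamma (x + 1/2) = exp ((1 - 2 * x) * ln 2) * sqrt pi * Gamma (2 * x)"
proof -
  have not_nonpos: "complex_of_real y \<notin> \<int>\<^sub>\<le>\<^sub>0" if "y > 0" for y
    using that by (auto simp: of_real_in_nonpos_Ints_iff elim!: nonpos_Ints_cases)
  have "complex_of_real (Gamma x * Gamma (x + 1/2)) = Gamma (complex_of_real x) * Gamma (complex_of_real x + 1/2)"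
    by (simp add: Gamma_complex_of_real flip: Gamma_complex_of_real)
  also have "\<dots> = exp ((1 - 2 * complex_of_real x) * of_real (ln 2)) * of_real (sqrt pi) * Gamma (2 * complex_of_real x)"
    using not_nonpos[of x] not_nonpos[of "x + 1/2"] x by (intro Gamma_legendre_duplication) simp_all
  also have "\<dots> = complex_of_real (exp ((1 - 2 * x) * ln 2) * sqrt pi * Gamma (2 * x))"
    using Gamma_complex_of_real[of "2 * x"] by (simp flip: exp_of_real)
  finally show ?thesis by (simp only: of_real_eq_iff)
qed

lemma binet_shift:
  fixes x :: real
  assumes "x > 0"
  shows "binet (x + 1) - binet x = (x + 1/2) * (ln x - ln (x + 1)) + 1"
  using ln_Gamma_plus1_real[OF assms] unfolding binet_def by (simp add: algebra_simps)

lemma binet_duplication: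
  fixes x :: real
  assumes x: "x > 0"
  shows "binet x + binet (x + 1/2) - binet (2 * x) = 1/2 + x * ln x - x * ln (x + 1/2)"
proof -
  have "ln (Gamma x * Gamma (x + 1/2)) = ln (exp ((1 - 2 * x) * ln 2) * sqrt pi * Gamma (2 * x))"
    using Gamma_legendre_duplication_real[OF x] by simp
  hence "ln_Gamma x + ln_Gamma (x + 1/2) = (1 - 2 * x) * ln 2 + ln pi / 2 + ln_Gamma (2 * x)"
    using x by (simp add: ln_mult_pos ln_Gamma_real_pos ln_sqrt)
  moreover have "ln (2 * x) = ln 2 + ln x" using x by (simp add: ln_mult_pos)
  moreover have "ln (2 * pi) = ln 2 + ln pi" by (simp add: ln_mult_pos)
  ultimately show ?thesis unfolding binet_def by (simp add: algebra_simps)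
qed

lemma binet_eq_laplace_plus_affine:
  obtains \<alpha> \<beta> where "\<And>x. x > 0 \<Longrightarrow> binet x = laplace_deriv 0 binet_kernel x + \<alpha> + \<beta> * x"
proof -
  have not_nonpos: "x \<notin> \<int>\<^sub>\<le>\<^sub>0" if "x > 0" for x :: real
    using that nonpos_Ints_nonpos by fastforce
  have binet': "(binet has_real_derivative Digamma x - ln x + 1 / (2 * x)) (at x)" if "x > 0" for x
    unfolding binet_def[abs_def] using that by (auto intro!: derivative_eq_intros simp: field_simps)
  have binet'': "((\<lambda>x. Digamma x - ln x + 1 / (2 * x)) has_real_derivative
      Polygamma 1 x - 1 / x - 1 / (2 * x\<^sup>2)) (at x)" if "x > 0" for x
    using that not_nonpos[OF that]
    by (auto intro!: derivative_eq_intros simp: field_simps power2_eq_square)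
  define D1 where "D1 x = Digamma x - ln x + 1 / (2 * x) - laplace_deriv 1 binet_kernel x" for x
  have "D1 constant_on {0<..}"
  proof (rule has_field_derivative_0_imp_constant_on)
    fix x :: real
    assume "x \<in> {0<..}"
    hence x: "x > 0" by simp
    have "(D1 has_real_derivative (Polygamma 1 x - 1 / x - 1 / (2 * x\<^sup>2)) - laplace_deriv 2 binet_kernel x) (at x)"
      unfolding D1_def[abs_def]
      using binet''[OF x] laplace_deriv_has_real_derivative[OF binet_kernel_continuous abs_binet_kernel_le x, of 1]
      by (intro derivative_intros) (simp_all add: numeral_2_eq_2)
    thus "(D1 has_real_derivative 0) (at x)"
      using laplace_deriv_2_binet_kernel[OF x] by (simp add: field_simps)
  qed auto
  then obtain \<beta> where \<beta>: "\<And>x. x > 0 \<Longrightarrow> D1 x = \<beta>"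
    unfolding constant_on_def by auto
  define D0 where "D0 x = binet x - laplace_deriv 0 binet_kernel x - \<beta> * x" for x
  have "D0 constant_on {0<..}"
  proof (rule has_field_derivative_0_imp_constant_on)
    fix x :: real
    assume "x \<in> {0<..}"
    hence x: "x > 0" by simp
    have "(D0 has_real_derivative (Digamma x - ln x + 1 / (2 * x)) - laplace_deriv 1 binet_kernel x - \<beta>) (at x)"
      unfolding D0_def[abs_def]
      using binet'[OF x] laplace_deriv_has_real_derivative[OF binet_kernel_continuous abs_binet_kernel_le x, of 0]
      by (auto intro!: derivative_eq_intros)
    thus "(D0 has_real_derivative 0) (at x)"
      using \<beta>[OF x] by (simp add: D1_def)
  qed auto
  then obtain \<alpha> where "\<And>x. x > 0 \<Longrightarrow> D0 x = \<alpha>"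
    unfolding constant_on_def by auto
  thus ?thesis
    using that[of \<alpha> \<beta>] unfolding D0_def by force
qed

text \<open>
  Both sides have the same second derivative; the functional equations of
  \<open>binet\<close> for \<open>x \<mapsto> x + 1\<close> and for the duplication, whose right-hand sides tend to \<open>0\<close>, then
  force first the slope and then the constant of the affine difference to vanish, since the
  Laplace transform tends to \<open>0\<close>.
\<close>

lemma binet_eq_laplace:
  fixes x :: real
  assumes x: "x > 0"
  shows "binet x = laplace_deriv 0 binet_kernel x"
proof -
  obtain \<alpha> \<beta> where affine: "\<And>x. x > 0 \<Longrightarrow> binet x = laplace_deriv 0 binet_kernel x + \<alpha> + \<beta> * x"
    using binet_eq_laplace_plus_affine by blast
  let ?L = "laplace_deriv 0 binet_kernel"
  have "filterlim (\<lambda>x::real. x + 1) at_top at_top" "filterlim (\<lambda>x::real. x + 1/2) at_top at_top"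
    "filterlim (\<lambda>x::real. 2 * x) at_top at_top"
    by real_asymp+
  note L_lim = laplace_binet_kernel_tendsto_0 this[THEN filterlim_compose[OF laplace_binet_kernel_tendsto_0]]
  have "((\<lambda>x. ((x + 1/2) * (ln x - ln (x + 1)) + 1) - (?L (x + 1) - ?L x)) \<longlongrightarrow> 0 - (0 - 0)) at_top"
  proof (intro tendsto_diff L_lim)
    show "((\<lambda>x::real. (x + 1/2) * (ln x - ln (x + 1)) + 1) \<longlongrightarrow> 0) at_top"
      by real_asymp
  qed
  moreover have "\<forall>\<^sub>F x in at_top. ((x + 1/2) * (ln x - ln (x + 1)) + 1) - (?L (x + 1) - ?L x) = \<beta>"
    using eventually_gt_at_top[of "0::real"]
    by eventually_elim (use binet_shift affine in \<open>force simp: algebra_simps\<close>)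
  ultimately have "((\<lambda>x::real. \<beta>) \<longlongrightarrow> 0) at_top"
    by (simp add: tendsto_cong)
  hence \<beta>: "\<beta> = 0"
    by (simp add: tendsto_const_iff)
  have "((\<lambda>x. (1/2 + x * ln x - x * ln (x + 1/2)) - (?L x + ?L (x + 1/2) - ?L (2 * x))) \<longlongrightarrow> 0 - (0 + 0 - 0)) at_top"
  proof (intro tendsto_diff tendsto_add L_lim)
    show "((\<lambda>x::real. 1/2 + x * ln x - x * ln (x + 1/2)) \<longlongrightarrow> 0) at_top"
      by real_asymp
  qed
  moreover have "\<forall>\<^sub>F x in at_top. (1/2 + x * ln x - x * ln (x + 1/2)) - (?L x + ?L (x + 1/2) - ?L (2 * x)) = \<alpha>"
    using eventually_gt_at_top[of "0::real"]
  proof eventually_elim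
    case (elim x)
    thus ?case
      using binet_duplication[OF elim] affine[of x] affine[of "x + 1/2"] affine[of "2 * x"] \<beta>
      by (simp add: algebra_simps)
  qed
  ultimately have "((\<lambda>x::real. \<alpha>) \<longlongrightarrow> 0) at_top"
    by (simp add: tendsto_cong)
  hence "\<alpha> = 0"
    by (simp add: tendsto_const_iff)
  thus ?thesis using affine[OF x] \<beta> by simp
qed


section \<open>The function \<open>G\<^sub>a\<close>\<close>

definition G_kernel :: "real \<Rightarrow> real \<Rightarrow> real" where
  "G_kernel a t = (t - 2 + (2 + t) * exp (-t) - t ^ 3 / 6 * exp (-a * t)) / (2 * t\<^sup>2 * (1 - exp (-t)))"

lemma G_eq_binet: "G a x = binet x - 1/12 * Polygamma 1 (x + a)"
  by (simp add: G_def binet_def)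

lemma G_kernel_eq_binet_kernel:
  fixes a t :: real
  assumes t: "t > 0"
  shows "G_kernel a t = binet_kernel t - t * exp (-a * t) / (12 * (1 - exp (-t)))"
proof -
  define d where "d = 1 - exp (-t)"
  have d: "d \<noteq> 0" using t by (simp add: d_def)
  have "G_kernel a t = (t - 2 + (2 + t) * exp (-t)) / (2 * t\<^sup>2 * d) - (t ^ 3 / 6 * exp (-a * t)) / (2 * t\<^sup>2 * d)"
    unfolding G_kernel_def d_def by (simp add: diff_divide_distrib)
  also have "(t ^ 3 / 6 * exp (-a * t)) / (2 * t\<^sup>2 * d) = t * exp (-a * t) / (12 * d)"
    using t d by (simp add: field_simps power2_eq_square power3_eq_cube)
  finally show ?thesis by (simp add: binet_kernel_def d_def)
qed

lemma G_kernel_continuous: "continuous_on {0<..} (G_kernel a)"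
  unfolding G_kernel_def by (intro continuous_intros) auto

lemma abs_G_kernel_le:
  fixes a t :: real
  assumes t: "t > 0" and a: "a \<ge> 0"
  shows "\<bar>G_kernel a t\<bar> \<le> 2 * (1 + t)"
proof -
  define r where "r = t * exp (-a * t) / (12 * (1 - exp (-t)))"
  have "0 \<le> r"
    using t by (simp add: r_def)
  have "r = exp (-a * t) * (t / (1 - exp (-t))) / 12"
    by (simp add: r_def ac_simps)
  also have "\<dots> \<le> 1 * (1 + t) / 12"
    using t a div_one_minus_exp_neg_le[OF t] by (intro divide_right_mono mult_mono) auto
  finally have "r \<le> (1 + t) / 12" by simp
  thus ?thesis
    using \<open>0 \<le> r\<close> binet_kernel_nonneg[OF t] binet_kernel_le_1[OF t] t
    unfolding G_kernel_eq_binet_kernel[OF t] r_def[symmetric] abs_le_iff by auto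
qed

lemma G_has_integral:
  fixes a x :: real
  assumes a: "a \<ge> 0" and x: "x > 0"
  shows "((\<lambda>t. G_kernel a t * exp (-x * t)) has_integral G a x) {0<..}"
proof -
  have "((\<lambda>t. binet_kernel t * exp (-x * t)) has_integral binet x) {0<..}"
    using integrable_integral[OF laplace_deriv_integrable[OF binet_kernel_continuous abs_binet_kernel_le x, of 0]]
      binet_eq_laplace[OF x]
    unfolding laplace_deriv_def by simp
  hence "((\<lambda>t. binet_kernel t * exp (-x * t) - 1/12 * (t * exp (-(x + a) * t) / (1 - exp (-t)))) has_integral
      (binet x - 1/12 * Polygamma 1 (x + a))) {0<..}"
    using a x by (intro has_integral_diff has_integral_mult_right trigamma_has_integral) auto
  thus ?thesis
    unfolding G_eq_binet
  proof (rule has_integral_eq[rotated])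
    fix t :: real
    assume "t \<in> {0<..}"
    hence t: "t > 0" by simp
    have "exp (-(x + a) * t) = exp (-a * t) * exp (-x * t)"
      by (simp add: algebra_simps flip: exp_add)
    thus "binet_kernel t * exp (-x * t) - 1/12 * (t * exp (-(x + a) * t) / (1 - exp (-t)))
        = G_kernel a t * exp (-x * t)"
      unfolding G_kernel_eq_binet_kernel[OF t] by (simp add: algebra_simps)
  qed
qed

lemma G_eq_laplace: "a \<ge> 0 \<Longrightarrow> x > 0 \<Longrightarrow> G a x = laplace_deriv 0 (G_kernel a) x"
  using G_has_integral[of a x] unfolding laplace_deriv_def by (simp add: integral_unique)

lemma G_kernel_pos:
  fixes a t :: real
  assumes a: "a \<ge> 1/2" and t: "t > 0"
  shows "G_kernel a t > 0"
proof -
  have "t ^ 3 / 6 * exp (-a * t) \<le> t ^ 3 / 6 * exp (-t / 2)"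
    using a t by (intro mult_left_mono) (auto simp: mult_right_mono)
  also have "\<dots> < t - 2 + (2 + t) * exp (-t)"
    by (rule cube_exp_half_less_binet_numerator[OF t])
  finally show ?thesis
    unfolding G_kernel_def using t by (intro divide_pos_pos) auto
qed

lemma G_kernel_0_neg: "t > 0 \<Longrightarrow> G_kernel 0 t < 0"
  unfolding G_kernel_def using binet_numerator_less_cube[of t] by (intro divide_neg_pos) auto

text \<open>For \<open>a > 0\<close> the term \<open>\<Psi>'(x + a)\<close> stays bounded as \<open>x \<rightarrow> 0\<close>, while \<open>ln \<Gamma>(x) - (x - 1/2) ln x \<sim> -(ln x)/2\<close>.\<close>

lemma G_pos_near_0:
  fixes a :: real
  assumes a: "a > 0"
  obtains x where "x > 0" "G a x > 0"
proof -
  define c where "c x = ln_Gamma (x + 1) - 1/12 * Polygamma 1 (x + a) + x - 1/2 * ln (2 * pi)" for x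
  have G_eq: "G a x = c x + (-(x + 1/2) * ln x)" if "x > 0" for x
    unfolding G_eq_binet binet_def c_def using ln_Gamma_plus1_real[OF that] by (simp add: algebra_simps)
  have "isCont ln_Gamma (0 + 1 :: real)"
    by (rule DERIV_isCont, rule has_field_derivative_ln_Gamma_real) simp
  moreover have "isCont (Polygamma 1) (0 + a :: real)"
    using isCont_Polygamma[where f = "\<lambda>x. x" and z = a and n = 1] a nonpos_Ints_nonpos by fastforce
  ultimately have "(c \<longlongrightarrow> c 0) (at_right 0)"
    unfolding c_def by (intro tendsto_intros isCont_tendsto_compose[where g = ln_Gamma]
        isCont_tendsto_compose[where g = "Polygamma 1"])
  moreover have "filterlim (\<lambda>x::real. -(x + 1/2) * ln x) at_top (at_right 0)"
    by real_asymp
  ultimately have "filterlim (\<lambda>x. c x + (-(x + 1/2) * ln x)) at_top (at_right 0)"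
    by (rule filterlim_tendsto_add_at_top)
  hence "eventually (\<lambda>x. c x + (-(x + 1/2) * ln x) > 0) (at_right 0)"
    by (simp add: filterlim_at_top_dense)
  moreover have "eventually (\<lambda>x::real. x > 0) (at_right 0)"
    by (simp add: eventually_at_right_less)
  ultimately have "eventually (\<lambda>x. x > 0 \<and> G a x > 0) (at_right 0)"
    by eventually_elim (simp add: G_eq)
  from eventually_happens[OF this] show ?thesis
    using that by auto
qed

text \<open>
  Near \<open>t = 0\<close> the numerator is \<open>-(1 - 2a) t\<^sup>4/12 + O(t\<^sup>5)\<close> and the denominator is at most \<open>2t\<^sup>3\<close>.
\<close>

lemma G_kernel_le_small:
  fixes a t :: real
  assumes a: "0 \<le> a" "a < 1/2" and t: "0 < t" "t \<le> 5 * (1 - 2 * a) / 3"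
  shows "G_kernel a t \<le> -(1 - 2 * a) / 48 * t"
proof -
  define e where "e = (1 - 2 * a) / 12"
  have e: "e > 0" using a by (simp add: e_def)
  define num where "num = t - 2 + (2 + t) * exp (-t) - t ^ 3 / 6 * exp (-a * t)"
  define den where "den = 2 * t\<^sup>2 * (1 - exp (-t))"
  have "t ^ 3 / 6 * (1 - a * t) \<le> t ^ 3 / 6 * exp (-a * t)"
    using exp_ge_add_one_self[of "-a * t"] t by (intro mult_left_mono) auto
  hence "num \<le> t ^ 3 / 6 - t ^ 4 / 12 + t ^ 5 / 40 - t ^ 3 / 6 * (1 - a * t)"
    unfolding num_def using binet_numerator_le_quintic[of t] t by linarith
  also have "\<dots> = -e * t ^ 4 + t ^ 4 * (t / 40)"
    by (simp add: e_def field_simps power_numeral_reduce)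
  also have "t ^ 4 * (t / 40) \<le> t ^ 4 * (e / 2)"
    using t by (intro mult_left_mono) (auto simp: e_def)
  finally have num: "num \<le> -e / 2 * t ^ 4" by simp
  have "0 < e / 2 * t ^ 4"
    using e t by simp
  hence num_neg: "num < 0"
    using num by linarith
  have "0 < den"
    using t by (simp add: den_def)
  have "1 - exp (-t) \<le> t"
    using exp_ge_add_one_self[of "-t"] by simp
  hence "den \<le> 2 * t\<^sup>2 * t"
    unfolding den_def using t by (intro mult_left_mono) auto
  also have "\<dots> = 2 * t ^ 3"
    by (simp add: power2_eq_square power3_eq_cube)
  finally have "den \<le> 2 * t ^ 3" .
  have "G_kernel a t = num / den"
    by (simp add: G_kernel_def num_def den_def)
  also have "\<dots> \<le> num / (2 * t ^ 3)"
    using \<open>0 < den\<close> \<open>den \<le> 2 * t ^ 3\<close> num_neg t by (intro divide_left_mono_neg) auto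
  also have "\<dots> \<le> (-e / 2 * t ^ 4) / (2 * t ^ 3)"
    using num t by (intro divide_right_mono) auto
  also have "\<dots> = -(1 - 2 * a) / 48 * t"
  proof -
    have "t ^ 4 = t ^ 3 * t" by (simp add: power3_eq_cube power4_eq_xxxx)
    thus ?thesis using t by (simp add: e_def) (simp add: algebra_simps)
  qed
  finally show ?thesis .
qed

lemma G_kernel_le_linear_plus_quadratic:
  fixes a :: real
  assumes a: "0 \<le> a" "a < 1/2"
  obtains K where "K \<ge> 0" "\<And>t. t > 0 \<Longrightarrow> G_kernel a t \<le> -(1 - 2 * a) / 48 * t + K * t\<^sup>2"
proof
  define d where "d = 5 * (1 - 2 * a) / 3"
  have d: "d > 0" using a by (simp add: d_def)
  define K where "K = 2 / d\<^sup>2 + (2 + (1 - 2 * a) / 48) / d"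
  show "K \<ge> 0" using a d by (simp add: K_def)
  fix t :: real
  assume t: "t > 0"
  show "G_kernel a t \<le> -(1 - 2 * a) / 48 * t + K * t\<^sup>2"
  proof (cases "t \<le> d")
    case True
    have "0 \<le> K * t\<^sup>2" using \<open>K \<ge> 0\<close> by simp
    thus ?thesis
      using G_kernel_le_small[OF a t True[unfolded d_def]] by linarith
  next
    case False
    have "d\<^sup>2 \<le> t\<^sup>2"
      using False d by (intro power_mono) auto
    hence "1 \<le> t\<^sup>2 / d\<^sup>2"
      using d by simp
    moreover have "t \<le> t\<^sup>2 / d"
      using False d t by (simp add: power2_eq_square pos_le_divide_eq)
    ultimately have "2 * 1 + (2 + (1 - 2 * a) / 48) * t \<le> 2 * (t\<^sup>2 / d\<^sup>2) + (2 + (1 - 2 * a) / 48) * (t\<^sup>2 / d)"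
      using a by (intro add_mono mult_left_mono) auto
    also have "\<dots> = K * t\<^sup>2"
      by (simp add: K_def field_simps)
    finally show ?thesis
      using abs_le_D1[OF abs_G_kernel_le[OF t a(1)]] by (simp add: field_simps)
  qed
qed

lemma G_neg_somewhere:
  fixes a :: real
  assumes a: "0 \<le> a" "a < 1/2"
  obtains x where "x > 0" "G a x < 0"
proof -
  define e where "e = (1 - 2 * a) / 48"
  have e: "e > 0" using a by (simp add: e_def)
  obtain K where K: "K \<ge> 0" "\<And>t. t > 0 \<Longrightarrow> G_kernel a t \<le> -(1 - 2 * a) / 48 * t + K * t\<^sup>2"
    using G_kernel_le_linear_plus_quadratic[OF a] by blast
  have minus_e: "-(1 - 2 * a) / 48 = -e"
    by (simp add: e_def field_simps)
  define x where "x = 2 * K / e + 1"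
  have x: "x > 0" using K e by (simp add: x_def add_nonneg_pos)
  have "((\<lambda>t. -e * (t * exp (-x * t)) + K * (t\<^sup>2 * exp (-x * t))) has_integral (-e * (1 / x\<^sup>2) + K * (2 / x ^ 3))) {0<..}"
    by (intro has_integral_add has_integral_mult_right has_integral_mult_exp_neg_mult_Ioi
        has_integral_square_mult_exp_neg_mult_Ioi x)
  hence "G a x \<le> -e * (1 / x\<^sup>2) + K * (2 / x ^ 3)"
  proof (rule has_integral_le[OF G_has_integral[OF a(1) x]])
    fix t :: real
    assume "t \<in> {0<..}"
    hence "G_kernel a t * exp (-x * t) \<le> (-e * t + K * t\<^sup>2) * exp (-x * t)"
      using K(2) unfolding minus_e by (intro mult_right_mono) auto
    thus "G_kernel a t * exp (-x * t) \<le> -e * (t * exp (-x * t)) + K * (t\<^sup>2 * exp (-x * t))"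
      by (simp add: algebra_simps)
  qed
  also have "\<dots> = (2 * K - e * x) / x ^ 3"
    using x by (simp add: field_simps power2_eq_square power3_eq_cube)
  also have "\<dots> < 0"
  proof -
    have "e * x = 2 * K + e"
      using e by (simp add: x_def field_simps)
    thus ?thesis using x e by (intro divide_neg_pos) simp_all
  qed
  finally show ?thesis
    using that x by blast
qed

lemma completely_monotone_G_iff:
  fixes a :: real
  assumes a: "a \<ge> 0"
  shows "completely_monotone (G a) \<longleftrightarrow> a \<ge> 1/2"
proof
  assume cm: "completely_monotone (G a)"
  show "a \<ge> 1/2"
  proof (rule ccontr)
    assume "\<not> a \<ge> 1/2"
    then obtain x where x: "x > 0" "G a x < 0"
      using G_neg_somewhere[OF a] by force
    have "G a x > 0"
      using completely_monotone_imp_pos[OF cm x(1)] .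
    thus False using x(2) by simp
  qed
next
  assume "a \<ge> 1/2"
  show "completely_monotone (G a)"
  proof (rule completely_monotone_laplace[OF G_kernel_continuous, where M = 2])
    show "\<bar>G_kernel a t\<bar> \<le> 2 * (1 + t)" "G_kernel a t > 0" if "t > 0" for t
      using abs_G_kernel_le[OF that a] G_kernel_pos[OF \<open>a \<ge> 1/2\<close> that] by simp_all
    show "G a x = laplace_deriv 0 (G_kernel a) x" if "x > 0" for x
      using G_eq_laplace[OF a that] .
  qed
qed

lemma completely_monotone_uminus_G_iff:
  fixes a :: real
  assumes a: "a \<ge> 0"
  shows "completely_monotone (\<lambda>x. - G a x) \<longleftrightarrow> a = 0"
proof (intro iffI)
  assume cm: "completely_monotone (\<lambda>x. - G a x)"
  show "a = 0"
  proof (rule ccontr)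
    assume "a \<noteq> 0"
    with a have "a > 0" by simp
    then obtain x where x: "x > 0" "G a x > 0"
      by (rule G_pos_near_0)
    have "- G a x > 0"
      using completely_monotone_imp_pos[OF cm x(1)] by simp
    thus False using x(2) by simp
  qed
next
  assume "a = 0"
  show "completely_monotone (\<lambda>x. - G a x)"
  proof (rule completely_monotone_laplace[where h = "\<lambda>t. - G_kernel 0 t" and M = 2])
    show "continuous_on {0<..} (\<lambda>t. - G_kernel 0 t)"
      by (intro continuous_intros G_kernel_continuous)
    show "\<bar>- G_kernel 0 t\<bar> \<le> 2 * (1 + t)" "- G_kernel 0 t > 0" if "t > 0" for t
      using abs_G_kernel_le[OF that order_refl] G_kernel_0_neg[OF that] by simp_all
    show "- G a x = laplace_deriv 0 (\<lambda>t. - G_kernel 0 t) x" if "x > 0" for x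
      using G_eq_laplace[OF order_refl that] \<open>a = 0\<close> by (simp add: laplace_deriv_uminus)
  qed
qed

theorem mainTheorem14:
  fixes a :: real
  assumes "a \<ge> 0"
  shows "(\<forall>x>0. ((\<lambda>t. (t - 2 + (2 + t) * exp (-t) - t^3 / 6 * exp (-a*t))
                      / (2 * t^2 * (1 - exp (-t))) * exp (-x*t)) has_integral G a x) {0<..})
       \<and> (completely_monotone (G a) \<longleftrightarrow> a \<ge> 1/2)
       \<and> (completely_monotone (\<lambda>x. - G a x) \<longleftrightarrow> a = 0)"
proof -
  have "\<forall>x>0. ((\<lambda>t. G_kernel a t * exp (-x * t)) has_integral G a x) {0<..}"
    using G_has_integral[OF assms] by blast
  thus ?thesis
    unfolding G_kernel_def
    using completely_monotone_G_iff[OF assms] completely_monotone_uminus_G_iff[OF assms] by (intro conjI)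
qed

end
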